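(* Every graph $G$ satisfies $\chi'_{qm}(G)\le 3$.
   Context: All graphs are simple and finite. A $k$-edge-coloring of $G$ is any map $c:E(G)\to\{1,\dots,k\}$ (adjacent edges may share colors). It is quasi-majority if every vertex $v$ is incident to at most $\lceil d(v)/2\rceil$ edges of each single color. $\chi'_{qm}(G)$ denotes the least $k$ such that $G$ has a quasi-majority $k$-edge-coloring. *)

theory Defs
  imports Complex_Main
begin

definition simple_graph :: "'a set \<Rightarrow> 'a set set \<Rightarrow> bool" where
  "simple_graph V E \<longleftrightarrow> finite V \<and> (\<forall>e\<in>E. e \<subseteq> V \<and> card e = 2)"

definition incident_edges :: "'a set set \<Rightarrow> 'a \<Rightarrow> 'a set set" where
  "incident_edges E v = {e \<in> E. v \<in> e}"

definition degree :: "'a set set \<Rightarrow> 'a \<Rightarrow> nat" where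
  "degree E v = card (incident_edges E v)"

definition edge_coloring :: "'a set set \<Rightarrow> nat \<Rightarrow> ('a set \<Rightarrow> nat) \<Rightarrow> bool" where
  "edge_coloring E k c \<longleftrightarrow> (\<forall>e\<in>E. c e \<in> {1..k})"

definition quasi_majority :: "'a set \<Rightarrow> 'a set set \<Rightarrow> ('a set \<Rightarrow> nat) \<Rightarrow> bool" where
  "quasi_majority V E c \<longleftrightarrow>
     (\<forall>v\<in>V. \<forall>i. card {e \<in> incident_edges E v. c e = i} \<le> nat \<lceil>real (degree E v) / 2\<rceil>)"

definition chi_qm :: "'a set \<Rightarrow> 'a set set \<Rightarrow> nat" where
  "chi_qm V E = (LEAST k. \<exists>c. edge_coloring E k c \<and> quasi_majority V E c)"

end

theory Submission
  imports Defs
begin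

text \<open>Delete a vertex \<open>v\<close> and colour \<open>G - v\<close> by induction. A neighbour \<open>u\<close> of \<open>v\<close> has
  degree \<open>d(u) - 1\<close> in \<open>G - v\<close>, so at most one of the three colours already occurs
  \<open>\<lceil>d(u)/2\<rceil>\<close> times at \<open>u\<close>: the edge \<open>uv\<close> has a list of at least two colours that keep \<open>u\<close>
  quasi-majority. The edges at \<open>v\<close> are then coloured greedily from these lists: while an
  edge at \<open>v\<close> is still uncoloured, two colours cannot both be used \<open>\<lceil>d(v)/2\<rceil>\<close> times at \<open>v\<close>.\<close>

lemma nat_ceiling_half: "nat \<lceil>real d / 2\<rceil> = (d + 1) div 2"
proof (cases "even d")
  case True
  then show ?thesis by auto
next
  case False
  then obtain k where k: "d = 2 * k + 1" using oddE by blast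
  have "\<lceil>real d / 2\<rceil> = int k + 1"
    by (rule ceiling_unique) (auto simp: k)
  then show ?thesis using k by simp
qed

definition colour_class :: "'a set set \<Rightarrow> ('a set \<Rightarrow> nat) \<Rightarrow> 'a \<Rightarrow> nat \<Rightarrow> 'a set set" where
  "colour_class E c v i = {e \<in> incident_edges E v. c e = i}"

definition delete_vertex :: "'a set set \<Rightarrow> 'a \<Rightarrow> 'a set set" where
  "delete_vertex E v = {e \<in> E. v \<notin> e}"

lemma quasi_majority_iff:
  "quasi_majority V E c \<longleftrightarrow> (\<forall>v\<in>V. \<forall>i. card (colour_class E c v i) \<le> (degree E v + 1) div 2)"
  by (simp add: quasi_majority_def colour_class_def nat_ceiling_half)

lemma card_two_fibres_le:
  assumes "finite A" "i \<noteq> j"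
  shows "card {x \<in> A. f x = i} + card {x \<in> A. f x = j} \<le> card A"
proof -
  have "card {x \<in> A. f x = i} + card {x \<in> A. f x = j} = card ({x \<in> A. f x = i} \<union> {x \<in> A. f x = j})"
    using assms by (intro card_Un_disjoint[symmetric]) auto
  also have "\<dots> \<le> card A"
    using assms(1) by (intro card_mono) auto
  finally show ?thesis .
qed

lemma list_coloring_balanced:
  assumes "finite S" "card S \<le> 2 * m"
    and "\<And>x. x \<in> S \<Longrightarrow> \<exists>a\<in>L x. \<exists>b\<in>L x. a \<noteq> b"
  shows "\<exists>g. (\<forall>x\<in>S. g x \<in> L x) \<and> (\<forall>i. card {x \<in> S. g x = i} \<le> m)"
  using assms
proof (induction S rule: finite_induct)
  case empty
  then show ?case by auto
next
  case (insert x S)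
  then obtain g where g_lists: "\<forall>y\<in>S. g y \<in> L y" and g_classes: "\<forall>i. card {y \<in> S. g y = i} \<le> m"
    by auto
  obtain a b where ab: "a \<in> L x" "b \<in> L x" "a \<noteq> b"
    using insert.prems(2) by blast
  have "card {y \<in> S. g y = a} + card {y \<in> S. g y = b} < 2 * m"
    using card_two_fibres_le[OF insert.hyps(1) ab(3), of g] insert.prems(1) insert.hyps by simp
  then have "card {y \<in> S. g y = a} < m \<or> card {y \<in> S. g y = b} < m"
    by linarith
  then obtain k where k: "k \<in> L x" "card {y \<in> S. g y = k} < m"
    using ab by blast
  have "card {y \<in> insert x S. (g(x := k)) y = i} \<le> m" for i
  proof (cases "k = i")
    case True
    then have "{y \<in> insert x S. (g(x := k)) y = i} = insert x {y \<in> S. g y = i}"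
      using insert.hyps(2) by auto
    then show ?thesis
      using True k(2) insert.hyps(1) by (simp add: card_insert_if)
  next
    case False
    then have "{y \<in> insert x S. (g(x := k)) y = i} = {y \<in> S. g y = i}"
      using insert.hyps(2) by auto
    then show ?thesis using g_classes by simp
  qed
  moreover have "\<forall>y\<in>insert x S. (g(x := k)) y \<in> L y"
    using g_lists k(1) by simp
  ultimately show ?case by blast
qed

lemma two_small_fibres_of_three:
  fixes f :: "'a \<Rightarrow> nat"
  assumes "finite A" "card A < 2 * N"
  shows "\<exists>a\<in>{i \<in> {1..3}. card {x \<in> A. f x = i} < N}. \<exists>b\<in>{i \<in> {1..3}. card {x \<in> A. f x = i} < N}. a \<noteq> b"
proof -
  have small: "card {x \<in> A. f x = i} < N \<or> card {x \<in> A. f x = j} < N" if "i \<noteq> j" for i j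
    using card_two_fibres_le[OF assms(1) that, of f] assms(2) by linarith
  consider "card {x \<in> A. f x = 1} < N" "card {x \<in> A. f x = 2} < N"
    | "card {x \<in> A. f x = 1} < N" "card {x \<in> A. f x = 3} < N"
    | "card {x \<in> A. f x = 2} < N" "card {x \<in> A. f x = 3} < N"
    using small[of 1 2] small[of 1 3] small[of 2 3] by fastforce
  then show ?thesis
  proof cases
    case 1
    then show ?thesis by (intro bexI[of _ 1] bexI[of _ 2]) auto
  next
    case 2
    then show ?thesis by (intro bexI[of _ 1] bexI[of _ 3]) auto
  next
    case 3
    then show ?thesis by (intro bexI[of _ 2] bexI[of _ 3]) auto
  qed
qed

lemma edge_eq_if_endpoints:
  assumes "card e = 2" "u \<in> e" "v \<in> e" "u \<noteq> v"
  shows "e = {u, v}"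
proof -
  obtain a b where "e = {a, b}" "a \<noteq> b"
    using assms(1) by (auto simp: card_2_iff)
  then show ?thesis
    using assms(2-4) by auto
qed

lemma incident_edges_delete_vertex:
  assumes "\<forall>e\<in>E. card e = 2" "u \<noteq> v"
  shows "incident_edges E u = incident_edges (delete_vertex E v) u \<union> (E \<inter> {{u, v}})"
  using assms edge_eq_if_endpoints[of _ u v] by (auto simp: incident_edges_def delete_vertex_def)

lemma degree_delete_vertex:
  assumes "finite E" "\<forall>e\<in>E. card e = 2" "u \<noteq> v"
  shows "degree E u = degree (delete_vertex E v) u + card (E \<inter> {{u, v}})"
  unfolding degree_def incident_edges_delete_vertex[OF assms(2,3)]
  using assms(1) by (intro card_Un_disjoint) (auto simp: incident_edges_def delete_vertex_def)

definition free_colours :: "'a set set \<Rightarrow> 'a \<Rightarrow> ('a set \<Rightarrow> nat) \<Rightarrow> 'a set \<Rightarrow> nat set" where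
  "free_colours E v c e = {i \<in> {1..3}. \<forall>u \<in> e - {v}.
     card (colour_class (delete_vertex E v) c u i) < (degree E u + 1) div 2}"

lemma two_free_colours:
  fixes c :: "'a set \<Rightarrow> nat"
  assumes fin: "finite E" and two: "\<forall>e\<in>E. card e = 2" and e: "e \<in> incident_edges E v"
  shows "\<exists>a\<in>free_colours E v c e. \<exists>b\<in>free_colours E v c e. a \<noteq> b"
proof -
  have "e \<in> E" "v \<in> e" "card e = 2"
    using e two by (auto simp: incident_edges_def)
  then obtain u where u: "u \<noteq> v" "e = {u, v}"
    using edge_eq_if_endpoints by (fastforce simp: card_2_iff)
  then have "degree E u = degree (delete_vertex E v) u + 1"
    using degree_delete_vertex[OF fin two u(1)] \<open>e \<in> E\<close> by simp
  then have "card (incident_edges (delete_vertex E v) u) < 2 * ((degree E u + 1) div 2)"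
    by (simp add: degree_def)
  moreover have "finite (incident_edges (delete_vertex E v) u)"
    using fin by (simp add: incident_edges_def delete_vertex_def)
  moreover have "free_colours E v c e
      = {i \<in> {1..3}. card (colour_class (delete_vertex E v) c u i) < (degree E u + 1) div 2}"
    using u by (auto simp: free_colours_def)
  ultimately show ?thesis
    using two_small_fibres_of_three[of _ _ c] by (simp add: colour_class_def)
qed

lemma colour_class_bound_off_vertex:
  assumes fin: "finite E" and two: "\<forall>e\<in>E. card e = 2" and "w \<noteq> v"
    and agree: "\<forall>e\<in>delete_vertex E v. c e = c' e"
    and old_bound: "card (colour_class (delete_vertex E v) c' w i) \<le> (degree (delete_vertex E v) w + 1) div 2"
    and free: "{w, v} \<in> E \<Longrightarrow> c {w, v} \<in> free_colours E v c' {w, v}"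
  shows "card (colour_class E c w i) \<le> (degree E w + 1) div 2"
proof -
  let ?old = "colour_class (delete_vertex E v) c' w i"
  have "colour_class E c w i
      = {e \<in> incident_edges (delete_vertex E v) w. c e = i} \<union> {e \<in> E \<inter> {{w, v}}. c e = i}"
    unfolding colour_class_def incident_edges_delete_vertex[OF two \<open>w \<noteq> v\<close>] by blast
  also have "{e \<in> incident_edges (delete_vertex E v) w. c e = i} = ?old"
    using agree by (auto simp: colour_class_def incident_edges_def)
  finally have split: "colour_class E c w i = ?old \<union> {e \<in> E \<inter> {{w, v}}. c e = i}" .
  show ?thesis
  proof (cases "{w, v} \<in> E \<and> c {w, v} = i")
    case True
    have "card (colour_class E c w i) \<le> card ?old + card {e \<in> E \<inter> {{w, v}}. c e = i}"
      unfolding split by (rule card_Un_le)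
    moreover have "card {e \<in> E \<inter> {{w, v}}. c e = i} \<le> 1"
      using card_mono[of "{{w, v}}" "{e \<in> E \<inter> {{w, v}}. c e = i}"] by auto
    moreover have "card ?old < (degree E w + 1) div 2"
      using free True \<open>w \<noteq> v\<close> by (auto simp: free_colours_def)
    ultimately show ?thesis
      by linarith
  next
    case False
    then have no_new_edge: "{e \<in> E \<inter> {{w, v}}. c e = i} = {}"
      by auto
    have "card (colour_class E c w i) = card ?old"
      unfolding split no_new_edge by simp
    also have "\<dots> \<le> (degree (delete_vertex E v) w + 1) div 2"
      by (rule old_bound)
    also have "\<dots> \<le> (degree E w + 1) div 2"
      using degree_delete_vertex[OF fin two \<open>w \<noteq> v\<close>] by (intro div_le_mono) simp
    finally show ?thesis .
  qed
qed

lemma quasi_majority_3_coloring_extend: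
  assumes fin: "finite E" and two: "\<forall>e\<in>E. card e = 2"
    and col': "edge_coloring (delete_vertex E v) 3 c'"
    and qm': "quasi_majority UNIV (delete_vertex E v) c'"
  shows "\<exists>c. edge_coloring E 3 c \<and> quasi_majority UNIV E c"
proof -
  have "finite (incident_edges E v)" "card (incident_edges E v) \<le> 2 * ((degree E v + 1) div 2)"
    using fin by (simp_all add: incident_edges_def degree_def)
  then obtain g where g_lists: "\<forall>e\<in>incident_edges E v. g e \<in> free_colours E v c' e"
    and g_classes: "\<forall>i. card {e \<in> incident_edges E v. g e = i} \<le> (degree E v + 1) div 2"
    using list_coloring_balanced[of "incident_edges E v" _ "free_colours E v c'"]
      two_free_colours[OF fin two] by blast
  define c where "c e = (if v \<in> e then g e else c' e)" for e
  have "edge_coloring E 3 c"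
    using col' g_lists
    by (auto simp: edge_coloring_def c_def free_colours_def incident_edges_def delete_vertex_def)
  moreover have "card (colour_class E c w i) \<le> (degree E w + 1) div 2" for w i
  proof (cases "w = v")
    case True
    then have "colour_class E c w i = {e \<in> incident_edges E v. g e = i}"
      by (auto simp: colour_class_def c_def incident_edges_def)
    then show ?thesis
      using g_classes True by simp
  next
    case False
    show ?thesis
    proof (rule colour_class_bound_off_vertex[OF fin two False])
      show "\<forall>e\<in>delete_vertex E v. c e = c' e"
        by (simp add: c_def delete_vertex_def)
      show "card (colour_class (delete_vertex E v) c' w i) \<le> (degree (delete_vertex E v) w + 1) div 2"
        using qm' by (simp add: quasi_majority_iff)
      show "c {w, v} \<in> free_colours E v c' {w, v}" if "{w, v} \<in> E"
        using g_lists that by (simp add: c_def incident_edges_def)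
    qed
  qed
  ultimately show ?thesis
    by (auto simp: quasi_majority_iff)
qed

lemma quasi_majority_3_coloring_exists:
  assumes "finite V" "\<forall>e\<in>E. e \<subseteq> V \<and> card e = 2"
  shows "\<exists>c. edge_coloring E 3 c \<and> quasi_majority UNIV E c"
  using assms
proof (induction V arbitrary: E rule: finite_induct)
  case empty
  then have "E = {}"
    by (metis card.empty ex_in_conv subset_empty zero_neq_numeral)
  then show ?case
    by (simp add: edge_coloring_def quasi_majority_iff colour_class_def incident_edges_def)
next
  case (insert v V)
  have "E \<subseteq> Pow (insert v V)"
    using insert.prems by auto
  then have "finite E"
    using insert.hyps(1) by (simp add: finite_subset)
  moreover have "\<forall>e\<in>E. card e = 2"
    using insert.prems by blast
  moreover have "\<forall>e\<in>delete_vertex E v. e \<subseteq> V \<and> card e = 2"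
    using insert.prems by (auto simp: delete_vertex_def)
  then obtain c' where "edge_coloring (delete_vertex E v) 3 c'" "quasi_majority UNIV (delete_vertex E v) c'"
    using insert.IH by blast
  ultimately show ?case
    by (rule quasi_majority_3_coloring_extend)
qed

theorem mainTheorem13:
  fixes V :: "'a set" and E :: "'a set set"
  assumes "simple_graph V E"
  shows "chi_qm V E \<le> 3"
proof -
  have "finite V" "\<forall>e\<in>E. e \<subseteq> V \<and> card e = 2"
    using assms by (simp_all add: simple_graph_def)
  then obtain c where "edge_coloring E 3 c" "quasi_majority UNIV E c"
    using quasi_majority_3_coloring_exists by blast
  then have "\<exists>c. edge_coloring E 3 c \<and> quasi_majority V E c"
    by (auto simp: quasi_majority_def)
  then show ?thesis
    unfolding chi_qm_def by (rule Least_le)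
qed

end
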